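(* Let $p\ge 2$ and $m\ge 2$ be integers. There exist $W\in\mathbb{R}^{2\times p}$ and $V\in\mathbb{R}^{p\times 2}$ such that the width-$2$ sine network $s^\theta(x)=V\sin(Wx)$, $\theta=(W,V)$, satisfies \[ \mathbb{P}_{(X,Y)\sim\mathcal{D}_m}\big[h_\theta(X)=Y\big]=1 . \]
   Context: Let $[p]=\{0,1,\dots,p-1\}$ and let $e_r$ ($r\in[p]$) be the standard basis vectors of $\mathbb{R}^p$. For an integer $m\ge1$, let $\mathcal{X}_m=\{x\in\{0,1,\dots,m\}^p:\ \|x\|_1=m\}$. The distribution $\mathcal{D}_m$ on $\mathcal{X}_m\times[p]$ is that of $(X,Y)$ where $s_1,\dots,s_m$ are i.i.d. uniform on $[p]$, $X=\sum_{i=1}^m e_{s_i}$ and $Y=(\sum_{i=1}^m s_i)\bmod p$ (equivalently $Y=(\sum_{r\in[p]} rX_r)\bmod p$). The function $\sin$ is applied entrywise. For a score vector $s^\theta(x)\in\mathbb{R}^p$ with coordinates indexed by $[p]$, the predictor is $h_\theta(x)=\ell$ if $s^\theta_\ell(x)>s^\theta_k(x)$ for all $k\ne\ell$, and $h_\theta(x)=\bot$ (an invalid prediction, never equal to any label) otherwise. *)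

theory Defs
  imports "HOL-Probability.Probability"
begin

fun draws :: "nat \<Rightarrow> nat \<Rightarrow> nat list pmf" where
  "draws p 0 = return_pmf []"
| "draws p (Suc m) =
     bind_pmf (pmf_of_set {..<p}) (\<lambda>s. map_pmf (\<lambda>l. s # l) (draws p m))"

text \<open>The distribution D_m of (X, Y): X = sum of e_{s_i} (vector of counts indexed by [p]),
  Y = (sum of s_i) mod p.\<close>
definition D :: "nat \<Rightarrow> nat \<Rightarrow> ((nat \<Rightarrow> nat) \<times> nat) pmf" where
  "D p m = map_pmf (\<lambda>l. (\<lambda>r. count_list l r, sum_list l mod p)) (draws p m)"

text \<open>Width-2 sine network s(x) = V sin(W x), with W a 2 x p matrix (W j r, j<2, r<p)
  and V a p x 2 matrix (V l j, l<p, j<2). Coordinate l of the score vector.\<close>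
definition score :: "nat \<Rightarrow> (nat \<Rightarrow> nat \<Rightarrow> real) \<Rightarrow> (nat \<Rightarrow> nat \<Rightarrow> real) \<Rightarrow> (nat \<Rightarrow> nat) \<Rightarrow> nat \<Rightarrow> real" where
  "score p W V x l = (\<Sum>j<2. V l j * sin (\<Sum>r<p. W j r * real (x r)))"

text \<open>Predictor: Some l if coordinate l strictly dominates all others, None (= bottom) otherwise.\<close>
definition predict :: "nat \<Rightarrow> (nat \<Rightarrow> nat \<Rightarrow> real) \<Rightarrow> (nat \<Rightarrow> nat \<Rightarrow> real) \<Rightarrow> (nat \<Rightarrow> nat) \<Rightarrow> nat option" where
  "predict p W V x =
     (if \<exists>l<p. \<forall>k<p. k \<noteq> l \<longrightarrow> score p W V x k < score p W V x l
      then Some (THE l. l < p \<and> (\<forall>k<p. k \<noteq> l \<longrightarrow> score p W V x k < score p W V x l))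
      else None)"

end

theory Submission
  imports Defs
begin

text \<open>With \<open>S = \<Sum>\<^sub>r r x\<^sub>r\<close> and \<open>\<parallel>x\<parallel>\<^sub>1 = m\<close>, the first hidden unit with weights
  \<open>2\<pi>r/p\<close> computes \<open>sin (2\<pi>S/p)\<close>; shifting every weight by \<open>\<pi>/(2m)\<close> adds exactly \<open>\<pi>/2\<close>
  to the second pre-activation, so it computes \<open>cos (2\<pi>S/p)\<close>. Reading out with
  \<open>(sin (2\<pi>l/p), cos (2\<pi>l/p))\<close> gives the score \<open>cos (2\<pi>(S - l)/p)\<close>, which equals 1 exactly
  when \<open>l \<equiv> S (mod p)\<close> and is smaller otherwise, so the predictor returns \<open>S mod p\<close>
  on every input in the support of \<open>D p m\<close>.\<close>

lemma set_pmf_draws: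
  assumes "p > 0" "l \<in> set_pmf (draws p m)"
  shows "length l = m \<and> set l \<subseteq> {..<p}"
  using assms(2)
proof (induction m arbitrary: l)
  case 0
  then show ?case by simp
next
  case (Suc m)
  have "{..<p} \<noteq> {}"
    using assms(1) by auto
  with Suc.prems obtain s l' where "s < p" "l' \<in> set_pmf (draws p m)" "l = s # l'"
    by (auto simp: set_pmf_of_set)
  with Suc.IH show ?case by auto
qed

lemma set_pmf_D:
  assumes "p > 0" "(x, y) \<in> set_pmf (D p m)"
  shows "(\<Sum>r<p. x r) = m" and "y = (\<Sum>r<p. r * x r) mod p"
proof -
  obtain l where l: "l \<in> set_pmf (draws p m)" and x: "x = count_list l"
    and y: "y = sum_list l mod p"
    using assms(2) unfolding D_def by auto
  have "length l = m" "set l \<subseteq> {..<p}"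
    using set_pmf_draws[OF assms(1) l] by auto
  then show "(\<Sum>r<p. x r) = m"
    using x by (simp add: sum_count_set)
  have "sum_list l = (\<Sum>r<p. count_list l r * r)"
    using sum_list_map_eq_sum_count2[OF \<open>set l \<subseteq> {..<p}\<close>, of id] by simp
  then show "y = (\<Sum>r<p. r * x r) mod p"
    using x y by (simp add: mult.commute)
qed

lemma predict_eq_SomeI:
  assumes "y < p" "\<And>k. k < p \<Longrightarrow> k \<noteq> y \<Longrightarrow> score p W V x k < score p W V x y"
  shows "predict p W V x = Some y"
proof -
  have "(THE l. l < p \<and> (\<forall>k<p. k \<noteq> l \<longrightarrow> score p W V x k < score p W V x l)) = y"
    using assms by (intro the_equality) (auto dest: order.asym)
  then show ?thesis
    using assms unfolding predict_def by auto
qed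

lemma cos_2pi_div_eq_1_iff:
  assumes "p > 0"
  shows "cos (2 * pi * of_int z / real p) = 1 \<longleftrightarrow> int p dvd z"
proof -
  have "2 * pi * of_int z / real p = of_int n * 2 * pi \<longleftrightarrow> z = n * int p" for n
  proof -
    have "2 * pi * of_int z / real p = of_int n * 2 * pi \<longleftrightarrow> real_of_int z = of_int (n * int p)"
      using assms pi_gt_zero by (auto simp: field_simps)
    then show ?thesis
      by (simp only: of_int_eq_iff)
  qed
  then show ?thesis
    by (auto simp: cos_one_2pi_int dvd_def mult.commute)
qed

lemma cos_2pi_div_less_at_mod:
  assumes "p > 0" "k < p" "k \<noteq> S mod p"
  shows "cos (2 * pi * (real S - real k) / real p) < cos (2 * pi * (real S - real (S mod p)) / real p)"
proof -
  have "int p dvd int S - int l \<longleftrightarrow> l = S mod p" if "l < p" for l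
    using that by (auto simp: mod_eq_dvd_iff [symmetric] simp flip: of_nat_mod)
  then have "cos (2 * pi * (real S - real l) / real p) = 1 \<longleftrightarrow> l = S mod p" if "l < p" for l
    using cos_2pi_div_eq_1_iff[OF assms(1), of "int S - int l"] that by simp
  then show ?thesis
    using assms by (metis cos_le_one mod_less_divisor order_less_le)
qed

definition modsum_W :: "nat \<Rightarrow> nat \<Rightarrow> nat \<Rightarrow> nat \<Rightarrow> real" where
  "modsum_W p m j r = 2 * pi * real r / real p + (if j = 0 then 0 else pi / (2 * real m))"

definition modsum_V :: "nat \<Rightarrow> nat \<Rightarrow> nat \<Rightarrow> real" where
  "modsum_V p l j = (if j = 0 then sin (2 * pi * real l / real p) else cos (2 * pi * real l / real p))"

lemma score_modsum:
  assumes "m > 0" "(\<Sum>r<p. x r) = m" "(\<Sum>r<p. r * x r) = S"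
  shows "score p (modsum_W p m) (modsum_V p) x l = cos (2 * pi * (real S - real l) / real p)"
proof -
  have preact: "(\<Sum>r<p. modsum_W p m j r * real (x r)) =
      2 * pi * real S / real p + (if j = 0 then 0 else pi / (2 * real m)) * real m" for j
    unfolding modsum_W_def assms(2,3) [symmetric]
    by (simp add: sum.distrib sum_distrib_left sum_divide_distrib algebra_simps)
  have "score p (modsum_W p m) (modsum_V p) x l =
      sin (2 * pi * real l / real p) * sin (2 * pi * real S / real p) +
      cos (2 * pi * real l / real p) * cos (2 * pi * real S / real p)"
    unfolding score_def preact using assms(1)
    by (simp add: numeral_2_eq_2 modsum_V_def sin_add)
  also have "\<dots> = cos (2 * pi * real S / real p - 2 * pi * real l / real p)"
    by (simp add: cos_diff)
  also have "2 * pi * real S / real p - 2 * pi * real l / real p = 2 * pi * (real S - real l) / real p"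
    by (simp add: diff_divide_distrib algebra_simps)
  finally show ?thesis .
qed

theorem mainTheorem1:
  fixes p m :: nat
  assumes "p \<ge> 2" and "m \<ge> 2"
  shows "\<exists>W V :: nat \<Rightarrow> nat \<Rightarrow> real.
           measure_pmf.prob (D p m) {(x, y). predict p W V x = Some y} = 1"
proof (intro exI)
  have "p > 0" "m > 0"
    using assms by auto
  have "predict p (modsum_W p m) (modsum_V p) x = Some y" if "(x, y) \<in> set_pmf (D p m)" for x y
  proof (rule predict_eq_SomeI)
    define S where "S = (\<Sum>r<p. r * x r)"
    have y: "y = S mod p"
      using set_pmf_D(2)[OF \<open>p > 0\<close> that] unfolding S_def .
    then show "y < p"
      using \<open>p > 0\<close> by simp
    note score = score_modsum[OF \<open>m > 0\<close> set_pmf_D(1)[OF \<open>p > 0\<close> that] S_def [symmetric]]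
    show "score p (modsum_W p m) (modsum_V p) x k < score p (modsum_W p m) (modsum_V p) x y"
      if "k < p" "k \<noteq> y" for k
      using cos_2pi_div_less_at_mod[OF \<open>p > 0\<close> that [unfolded y]] unfolding score y .
  qed
  then show "measure_pmf.prob (D p m) {(x, y). predict p (modsum_W p m) (modsum_V p) x = Some y} = 1"
    by (subst measure_pmf.prob_eq_1) (auto simp: AE_measure_pmf_iff)
qed

end
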